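(* Let $n\geq1$ be an integer and let $\lambda,\lambda_1\in\mathbb{C}$ with $0<|\lambda_1|<|\lambda|<1$. Let $Q\in\mathcal{H}[1,n]$ satisfy $Q(z)\prec 1+\lambda_1 z$ $(z\in\mathbb{U})$. (1) Assume $|\lambda|^2+|\lambda_1|^2\leq 1$, and define $$\alpha_0=\begin{cases}\dfrac{1-|\lambda|}{1+|\lambda_1|}, & \text{if } 0<|\lambda|+|\lambda_1|\leq 1,\\[2mm] \dfrac{1-(|\lambda|^2+|\lambda_1|^2)}{2(1-|\lambda_1|^2)}, & \text{if } |\lambda|^2+|\lambda_1|^2\leq 1\leq |\lambda|+|\lambda_1|.\end{cases}$$ If $p\in\mathcal{H}[1,n]$ and $\alpha$ is a real number with $\alpha\leq\alpha_0$ such that $$Q(z)\,[\alpha+(1-\alpha)p(z)]\prec 1+\lambda z\qquad(z\in\mathbb{U}),$$ then $\operatorname{Re}(p(z))>0$ for all $z\in\mathbb{U}$. (2) Assume $|\lambda|+2|\lambda_1|\leq 1$. If $w\in\mathcal{H}[0,n]$ and $$Q(z)\,[1+w(z)]\prec 1+\lambda z\qquad (z\in\mathbb{U}),$$ then $$|w(z)|<\frac{|\lambda|+|\lambda_1|}{1-|\lambda_1|}\leq 1\qquad(z\in\mathbb{U}).$$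
   Context: $\mathbb{U}=\{z\in\mathbb{C}:|z|<1\}$. For $a_0\in\mathbb{C}$ and an integer $n\geq1$, $\mathcal{H}[a_0,n]$ denotes the class of functions analytic in $\mathbb{U}$ of the form $p(z)=a_0+\sum_{k=n}^\infty a_k z^k$. For $f,g$ analytic in $\mathbb{U}$, $f\prec g$ ($f$ is subordinate to $g$) means there is an analytic $w$ in $\mathbb{U}$ with $w(0)=0$, $|w(z)|<1$ on $\mathbb{U}$, and $f(z)=g(w(z))$; for $\lambda\neq0$, $q\prec 1+\lambda z$ means $q(0)=1$ and $|q(z)-1|<|\lambda|$ on $\mathbb{U}$. *)

theory Defs
  imports "HOL-Analysis.Analysis"
begin

definition H_class :: "complex \<Rightarrow> nat \<Rightarrow> (complex \<Rightarrow> complex) set" where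
  "H_class a0 n = {p. p holomorphic_on ball 0 1 \<and> p 0 = a0 \<and>
      (\<forall>k. 1 \<le> k \<and> k < n \<longrightarrow> (deriv ^^ k) p 0 = 0)}"

definition subordinate :: "(complex \<Rightarrow> complex) \<Rightarrow> (complex \<Rightarrow> complex) \<Rightarrow> bool" where
  "subordinate f g \<longleftrightarrow> (\<exists>w. w holomorphic_on ball 0 1 \<and> w 0 = 0 \<and>
      (\<forall>z\<in>ball 0 1. norm (w z) < 1) \<and> (\<forall>z\<in>ball 0 1. f z = g (w z)))"

definition alpha0 :: "real \<Rightarrow> real \<Rightarrow> real" where
  "alpha0 a b = (if a + b \<le> 1 then (1 - a) / (1 + b)
                 else (1 - (a^2 + b^2)) / (2 * (1 - b^2)))"

end

theory Submission
  imports Defs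
begin

text \<open>Fix z in the disc and write Q z = 1 + v and the product = 1 + u, so that |v| < b = |lam1|
and |u| < a = |lam|. Then alpha + (1 - alpha) p z = (1 + u)/(1 + v) and w z = (1 + u)/(1 + v) - 1,
so both parts are pointwise estimates on the quotient (1 + u)/(1 + v).
For part (1), put r = |1 + v|, which lies in [1 - b, 1 + b]. Then 2 Re (1 + v) >= r^2 + 1 - b^2 and
Re ((1 + u) conj (1 + v)) > Re (1 + v) - a r, and alpha0 a b is exactly the largest
constant c with (r^2 + 1 - b^2)/2 - a r >= c r^2 on that interval. Part (2) is the
triangle inequality. The estimates are pointwise.\<close>

lemma subordinate_affine_norm_less:
  assumes "subordinate f (\<lambda>z. 1 + c * z)" "z \<in> ball 0 1" "c \<noteq> 0"
  shows "norm (f z - 1) < norm c"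
proof -
  from assms(1) obtain w where "\<forall>z\<in>ball 0 1. norm (w z) < 1" "\<forall>z\<in>ball 0 1. f z = 1 + c * w z"
    unfolding subordinate_def by blast
  with assms(2,3) show ?thesis by (simp add: norm_mult)
qed

lemma subordinate_product_quotient:
  assumes "subordinate Q (\<lambda>z. 1 + c1 * z)"
    and "subordinate (\<lambda>z. Q z * g z) (\<lambda>z. 1 + c * z)"
    and "c \<noteq> 0" "c1 \<noteq> 0" "norm c1 < 1" "z \<in> ball 0 1"
  obtains u v where "g z = (1 + u) / (1 + v)" "norm u < norm c" "norm v < norm c1"
proof
  define u where "u = Q z * g z - 1"
  define v where "v = Q z - 1"
  show u_less: "norm u < norm c" and v_less: "norm v < norm c1"
    unfolding u_def v_def using assms subordinate_affine_norm_less by blast+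
  have "Q z \<noteq> 0"
    using v_less \<open>norm c1 < 1\<close> by (auto simp: v_def)
  then show "g z = (1 + u) / (1 + v)"
    by (simp add: u_def v_def)
qed

lemma alpha0_quadratic_bound:
  fixes a b x r :: real
  assumes a: "0 < a" "a < 1" and b: "0 < b" "b < 1"
    and x: "2 * x \<ge> r\<^sup>2 + 1 - b\<^sup>2" and r: "1 - b \<le> r" "r \<le> 1 + b"
  shows "alpha0 a b * r\<^sup>2 \<le> x - a * r"
proof (cases "a + b \<le> 1")
  case True
  have "(2*a + b - 1) * r \<le> 1 - b\<^sup>2"
  proof (cases "2*a + b - 1 \<ge> 0")
    case True
    have "(2*a + b - 1) * r \<le> (2*a + b - 1) * (1 + b)"
      using r True by (simp add: mult_left_mono)
    also have "\<dots> \<le> 1 - b\<^sup>2"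
      using mult_left_mono[OF \<open>a + b \<le> 1\<close>, of b] b \<open>a + b \<le> 1\<close>
      by (simp add: power2_eq_square algebra_simps)
    finally show ?thesis .
  next
    case False
    have "(2*a + b - 1) * r \<le> (2*a + b - 1) * (1 - b)"
      using r False by (simp add: mult_left_mono_neg)
    also have "\<dots> \<le> (1 + b) * (1 - b)"
      using a b by (intro mult_right_mono) auto
    finally show ?thesis by (simp add: power2_eq_square algebra_simps)
  qed
  then have "0 \<le> (1 + b - r) * ((1 - b\<^sup>2) - (2*a + b - 1) * r)"
    using r by simp
  also have "\<dots> = (1 + b) * (r\<^sup>2 + 1 - b\<^sup>2) - 2*a*(1 + b)*r - 2*(1 - a)*r\<^sup>2"
    by (simp add: power2_eq_square algebra_simps)
  also have "\<dots> \<le> (1 + b) * (2 * x) - 2*a*(1 + b)*r - 2*(1 - a)*r\<^sup>2"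
    using mult_left_mono[OF x, of "1 + b"] b by linarith
  finally have "(1 - a) * r\<^sup>2 \<le> (1 + b) * (x - a*r)"
    by (simp add: algebra_simps)
  then have "(1 - a) / (1 + b) * r\<^sup>2 \<le> x - a*r"
    using b by (simp add: field_simps)
  with True show ?thesis
    by (simp add: alpha0_def)
next
  case False
  have d: "0 < 1 - b\<^sup>2" using b by (simp add: abs_square_less_1)
  have "0 \<le> (a*r - (1 - b\<^sup>2))\<^sup>2" by simp
  also have "\<dots> = 2*(1 - b\<^sup>2)*((r\<^sup>2 + 1 - b\<^sup>2)/2 - a*r) - (1 - (a\<^sup>2 + b\<^sup>2)) * r\<^sup>2"
    by (simp add: power2_eq_square field_simps)
  also have "\<dots> \<le> 2*(1 - b\<^sup>2)*(x - a*r) - (1 - (a\<^sup>2 + b\<^sup>2)) * r\<^sup>2"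
    using d x by (simp add: mult_left_mono)
  finally have "(1 - (a\<^sup>2 + b\<^sup>2)) * r\<^sup>2 \<le> (2*(1 - b\<^sup>2)) * (x - a*r)"
    by simp
  then have "(1 - (a\<^sup>2 + b\<^sup>2)) / (2*(1 - b\<^sup>2)) * r\<^sup>2 \<le> x - a*r"
    using d by (simp add: field_simps)
  with False show ?thesis
    by (simp add: alpha0_def)
qed

lemma Re_quotient_gt_alpha0:
  fixes u v :: complex and a b :: real
  assumes a: "0 < a" "a < 1" and b: "0 < b" "b < 1"
    and u: "norm u < a" and v: "norm v < b"
  shows "alpha0 a b < Re ((1 + u) / (1 + v))"
proof -
  define r where "r = norm (1 + v)"
  have r_lower: "1 - b \<le> r" unfolding r_def using v norm_triangle_ineq2[of 1 "-v"] by simp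
  have r_upper: "r \<le> 1 + b" unfolding r_def using v norm_triangle_ineq[of 1 v] by simp
  have r_pos: "0 < r" using r_lower b by simp
  have "r\<^sup>2 - 2 * Re (1 + v) + 1 = (norm v)\<^sup>2"
    unfolding r_def cmod_power2 by (simp add: power2_eq_square algebra_simps)
  also have "\<dots> \<le> b\<^sup>2" using v by (simp add: power_mono)
  finally have "r\<^sup>2 + 1 - b\<^sup>2 \<le> 2 * Re (1 + v)" by simp
  then have bound: "alpha0 a b * r\<^sup>2 \<le> Re (1 + v) - a * r"
    using alpha0_quadratic_bound[OF a b _ r_lower r_upper] by blast
  have "norm (u * cnj (1 + v)) = norm u * r"
    by (metis complex_mod_cnj norm_mult r_def)
  then have "- (a * r) < - norm (u * cnj (1 + v))"
    using u r_pos by simp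
  also have "\<dots> \<le> Re (u * cnj (1 + v))"
    using abs_Re_le_cmod[of "u * cnj (1 + v)"] by linarith
  finally have "alpha0 a b * r\<^sup>2 < Re ((1 + u) * cnj (1 + v))"
    using bound by (simp add: algebra_simps)
  moreover have "Re ((1 + u) / (1 + v)) = Re ((1 + u) * cnj (1 + v)) / r\<^sup>2"
    by (subst complex_div_cnj) (simp add: r_def Re_divide_of_real)
  ultimately show ?thesis
    using r_pos by (simp add: pos_less_divide_eq)
qed

lemma alpha0_less_one:
  fixes a b :: real
  assumes "0 < a" "a < 1" "0 < b" "b < 1"
  shows "alpha0 a b < 1"
proof -
  have "b\<^sup>2 < 1" "0 < a\<^sup>2" using assms by (simp_all add: abs_square_less_1)
  then have "1 - (a\<^sup>2 + b\<^sup>2) < 2 * (1 - b\<^sup>2)" by argo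
  with \<open>b\<^sup>2 < 1\<close> show ?thesis
    using assms by (simp add: alpha0_def)
qed

lemma norm_quotient_minus_one_less:
  fixes u v :: complex and a b :: real
  assumes "b < 1" and u: "norm u < a" and v: "norm v < b"
  shows "norm ((1 + u) / (1 + v) - 1) < (a + b) / (1 - b)"
proof -
  have lower: "1 - b < norm (1 + v)"
    using norm_triangle_ineq2[of 1 "-v"] v by simp
  then have "1 + v \<noteq> 0" using \<open>b < 1\<close> by auto
  then have "norm ((1 + u) / (1 + v) - 1) = norm (u - v) / norm (1 + v)"
    by (simp add: field_simps norm_divide)
  also have "\<dots> \<le> norm (u - v) / (1 - b)"
    using lower \<open>b < 1\<close> by (intro divide_left_mono mult_pos_pos) auto
  also have "\<dots> < (a + b) / (1 - b)"
    using norm_triangle_ineq4[of u v] u v \<open>b < 1\<close> by (intro divide_strict_right_mono) auto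
  finally show ?thesis .
qed

theorem lemma3:
  fixes n :: nat and lam lam1 :: complex and Q :: "complex \<Rightarrow> complex"
  assumes "n \<ge> 1"
    and "0 < norm lam1" and "norm lam1 < norm lam" and "norm lam < 1"
    and "Q \<in> H_class 1 n"
    and "subordinate Q (\<lambda>z. 1 + lam1 * z)"
  shows "(norm lam ^ 2 + norm lam1 ^ 2 \<le> 1 \<longrightarrow>
           (\<forall>p (\<alpha>::real). p \<in> H_class 1 n \<and> \<alpha> \<le> alpha0 (norm lam) (norm lam1) \<and>
              subordinate (\<lambda>z. Q z * (of_real \<alpha> + (1 - of_real \<alpha>) * p z)) (\<lambda>z. 1 + lam * z)
              \<longrightarrow> (\<forall>z\<in>ball 0 1. Re (p z) > 0)))
       \<and> (norm lam + 2 * norm lam1 \<le> 1 \<longrightarrow>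
           (\<forall>w. w \<in> H_class 0 n \<and> subordinate (\<lambda>z. Q z * (1 + w z)) (\<lambda>z. 1 + lam * z)
              \<longrightarrow> (\<forall>z\<in>ball 0 1. norm (w z) < (norm lam + norm lam1) / (1 - norm lam1)
                     \<and> (norm lam + norm lam1) / (1 - norm lam1) \<le> 1)))"
proof (intro conjI impI allI ballI; elim conjE)
  have a: "0 < norm lam" "norm lam < 1" and b: "0 < norm lam1" "norm lam1 < 1"
    and nonzero: "lam \<noteq> 0" "lam1 \<noteq> 0" using assms by auto
  note quotient = subordinate_product_quotient[OF assms(6) _ nonzero(1,2) b(2)]
  show "Re (p z) > 0"
    if \<alpha>_le: "\<alpha> \<le> alpha0 (norm lam) (norm lam1)" and z: "z \<in> ball 0 1"
      and sub: "subordinate (\<lambda>z. Q z * (of_real \<alpha> + (1 - of_real \<alpha>) * p z)) (\<lambda>z. 1 + lam * z)"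
    for p \<alpha> z
  proof -
    obtain u v where "of_real \<alpha> + (1 - of_real \<alpha>) * p z = (1 + u) / (1 + v)"
        and "norm u < norm lam" "norm v < norm lam1"
      using quotient[OF sub z] .
    then have "alpha0 (norm lam) (norm lam1) < Re (of_real \<alpha> + (1 - of_real \<alpha>) * p z)"
      using Re_quotient_gt_alpha0[OF a b] by simp
    then have "\<alpha> < \<alpha> + (1 - \<alpha>) * Re (p z)"
      using \<alpha>_le by simp
    moreover have "\<alpha> < 1" using \<alpha>_le alpha0_less_one[OF a b] by linarith
    ultimately show ?thesis by (simp add: zero_less_mult_iff)
  qed
  show "norm (w z) < (norm lam + norm lam1) / (1 - norm lam1)"
    if z: "z \<in> ball 0 1" and sub: "subordinate (\<lambda>z. Q z * (1 + w z)) (\<lambda>z. 1 + lam * z)"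
    for w z
  proof -
    obtain u v where "1 + w z = (1 + u) / (1 + v)" "norm u < norm lam" "norm v < norm lam1"
      using quotient[OF sub z] .
    then show ?thesis
      using norm_quotient_minus_one_less[OF b(2)] by (metis add_diff_cancel_left')
  qed
  show "(norm lam + norm lam1) / (1 - norm lam1) \<le> 1"
    if "norm lam + 2 * norm lam1 \<le> 1" using that b by (simp add: field_simps)
qed

end
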